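(* Assuming that $\mathcal{P}, \mathcal{Q}$ admit densities, we then obtain \begin{equation} W(\mathcal{P},\mathcal{Q})\leq \sum\limits_{y\in\mathcal{Y}} \check{W}_{y}(\mathcal{P},\mathcal{Q}), \end{equation} where we have a class-weighted joint distribution unbalanced Wasserstein distance $\check{W}_{y}(\mathcal{P},\mathcal{Q})$ defined as $$\check{W}_{y}(\mathcal{P},\mathcal{Q}) = \sup\limits_{\|\varphi_y\|_{Lip}\leq 1} \mathbb{E}_{z\sim\mathcal{P}_\mathcal{Z}}\left[\varphi_y(z,y)\mathcal{P}(Y=y|z)\right]-\mathbb{E}_{z\sim\mathcal{Q}_\mathcal{Z}}\left[\varphi_y(z,y)\mathcal{Q}(Y=y|z)\right].$$
   Context: $\mathcal{Z}\subset\mathbb{R}^d$ is a compact measurable feature space and $\mathcal{Y}$ a finite (discrete) label space; $\mathcal{P},\mathcal{Q}$ are probability distributions on $\mathcal{Z}\times\mathcal{Y}$ (the observed, partially labeled joint distributions of two domains), with marginals $\mathcal{P}_\mathcal{Z},\mathcal{Q}_\mathcal{Z}$ on $\mathcal{Z}$ and conditionals $\mathcal{P}(Y=y|z)$, $\mathcal{Q}(Y=y|z)$. $W$ is the 1-Wasserstein distance with cost the Euclidean metric on $\mathcal{Z}\times\mathcal{Y}$, i.e. $W(\mathcal{P},\mathcal{Q})=\sup_{\|\varphi\|_{Lip}\le 1}\mathbb{E}_{\mathcal{P}}[\varphi]-\mathbb{E}_{\mathcal{Q}}[\varphi]$ (Kantorovich–Rubinstein dual), and $\|\varphi_y\|_{Lip}$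 denotes the Lipschitz constant of $\varphi_y$. *)

theory Defs
  imports "HOL-Analysis.Analysis"
begin

text \<open>A joint distribution on Z x Y admitting a density is represented by its density
  p :: 'a => 'b => real w.r.t. (Lebesgue measure on Z) x (counting measure on the finite
  label set Ys).\<close>

definition is_joint_density :: "'a::euclidean_space set \<Rightarrow> 'b set \<Rightarrow> ('a \<Rightarrow> 'b \<Rightarrow> real) \<Rightarrow> bool" where
  "is_joint_density Z Ys p \<longleftrightarrow>
     (\<forall>z y. 0 \<le> p z y) \<and>
     (\<forall>z y. (z \<notin> Z \<or> y \<notin> Ys) \<longrightarrow> p z y = 0) \<and>
     (\<forall>y. integrable lborel (\<lambda>z. p z y)) \<and>
     (\<Sum>y\<in>Ys. \<integral>z. p z y \<partial>lborel) = 1"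

definition expect_joint :: "'a::euclidean_space set \<Rightarrow> 'b set \<Rightarrow> ('a \<Rightarrow> 'b \<Rightarrow> real) \<Rightarrow> ('a \<times> 'b \<Rightarrow> real) \<Rightarrow> real" where
  "expect_joint Z Ys p \<phi> = (\<Sum>y\<in>Ys. \<integral>z. indicator Z z * \<phi> (z, y) * p z y \<partial>lborel)"

definition marg_density :: "'b set \<Rightarrow> ('a \<Rightarrow> 'b \<Rightarrow> real) \<Rightarrow> 'a \<Rightarrow> real" where
  "marg_density Ys p z = (\<Sum>y\<in>Ys. p z y)"

text \<open>Conditional P(Y = y | z) (set to 0 where the marginal density vanishes; a null set for P_Z).\<close>
definition cond_prob :: "'b set \<Rightarrow> ('a \<Rightarrow> 'b \<Rightarrow> real) \<Rightarrow> 'b \<Rightarrow> 'a \<Rightarrow> real" where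
  "cond_prob Ys p y z = (if marg_density Ys p z = 0 then 0 else p z y / marg_density Ys p z)"

definition expect_marg :: "'a::euclidean_space set \<Rightarrow> 'b set \<Rightarrow> ('a \<Rightarrow> 'b \<Rightarrow> real) \<Rightarrow> ('a \<Rightarrow> real) \<Rightarrow> real" where
  "expect_marg Z Ys p g = (\<integral>z. indicator Z z * g z * marg_density Ys p z \<partial>lborel)"

text \<open>1-Wasserstein distance via Kantorovich-Rubinstein dual (product metric on 'a x 'b is Euclidean).\<close>
definition wasserstein1 :: "'a::euclidean_space set \<Rightarrow> 'b::euclidean_space set \<Rightarrow> ('a \<Rightarrow> 'b \<Rightarrow> real) \<Rightarrow> ('a \<Rightarrow> 'b \<Rightarrow> real) \<Rightarrow> ereal" where
  "wasserstein1 Z Ys p q =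
     (SUP \<phi> \<in> {\<phi>. 1-lipschitz_on (Z \<times> Ys) \<phi>}. ereal (expect_joint Z Ys p \<phi> - expect_joint Z Ys q \<phi>))"

definition wasserstein_check :: "'a::euclidean_space set \<Rightarrow> 'b::euclidean_space set \<Rightarrow> ('a \<Rightarrow> 'b \<Rightarrow> real) \<Rightarrow> ('a \<Rightarrow> 'b \<Rightarrow> real) \<Rightarrow> 'b \<Rightarrow> ereal" where
  "wasserstein_check Z Ys p q y =
     (SUP \<phi> \<in> {\<phi>. 1-lipschitz_on (Z \<times> Ys) \<phi>}.
        ereal (expect_marg Z Ys p (\<lambda>z. \<phi> (z, y) * cond_prob Ys p y z)
             - expect_marg Z Ys q (\<lambda>z. \<phi> (z, y) * cond_prob Ys q y z)))"

end

theory Submission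
  imports Defs
begin

text \<open>Multiplying the conditional \<open>P(Y = y | z)\<close> back by the marginal density recovers the joint
  density pointwise, so \<open>E\<^sub>P[\<phi>]\<close> splits into the class-weighted terms of \<open>W\<^sub>y\<close>, one per label.
  Each term is bounded by its supremum over Lipschitz \<open>\<phi>\<close>, and a supremum of sums is bounded
  by the sum of the suprema.\<close>

lemma cond_prob_mult_marg_density:
  assumes "finite Ys" "y \<in> Ys" "\<And>y'. y' \<in> Ys \<Longrightarrow> 0 \<le> p z y'"
  shows "cond_prob Ys p y z * marg_density Ys p z = p z y"
proof (cases "marg_density Ys p z = 0")
  case True
  then have "p z y = 0"
    using assms by (simp add: marg_density_def sum_nonneg_eq_0_iff)
  with True show ?thesis by (simp add: cond_prob_def)
next
  case False
  then show ?thesis by (simp add: cond_prob_def)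
qed

lemma expect_joint_eq_sum_expect_marg_cond_prob:
  assumes "finite Ys" "\<And>z y. 0 \<le> p z y"
  shows "expect_joint Z Ys p \<phi>
       = (\<Sum>y\<in>Ys. expect_marg Z Ys p (\<lambda>z. \<phi> (z, y) * cond_prob Ys p y z))"
  unfolding expect_joint_def expect_marg_def
proof (intro sum.cong refl)
  fix y assume "y \<in> Ys"
  then have "\<And>z. cond_prob Ys p y z * marg_density Ys p z = p z y"
    using assms by (intro cond_prob_mult_marg_density)
  then show "(\<integral>z. indicator Z z * \<phi> (z, y) * p z y \<partial>lborel)
      = (\<integral>z. indicator Z z * (\<phi> (z, y) * cond_prob Ys p y z) * marg_density Ys p z \<partial>lborel)"
    by (simp add: mult.assoc)
qed

theorem lemma3:
  fixes Z :: "'a::euclidean_space set" and Ys :: "'b::euclidean_space set"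
    and p q :: "'a \<Rightarrow> 'b \<Rightarrow> real"
  assumes "compact Z" and "Z \<in> sets lborel"
    and "finite Ys" and "Ys \<noteq> {}"
    and "is_joint_density Z Ys p" and "is_joint_density Z Ys q"
  shows "wasserstein1 Z Ys p q \<le> (\<Sum>y\<in>Ys. wasserstein_check Z Ys p q y)"
  unfolding wasserstein1_def
proof (rule SUP_least)
  fix \<phi> :: "'a \<times> 'b \<Rightarrow> real"
  assume lipschitz: "\<phi> \<in> {\<phi>. 1-lipschitz_on (Z \<times> Ys) \<phi>}"
  have "\<And>z y. 0 \<le> p z y" "\<And>z y. 0 \<le> q z y"
    using assms(5,6) unfolding is_joint_density_def by auto
  then have "expect_joint Z Ys p \<phi> - expect_joint Z Ys q \<phi>
     = (\<Sum>y\<in>Ys. expect_marg Z Ys p (\<lambda>z. \<phi> (z, y) * cond_prob Ys p y z)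
             - expect_marg Z Ys q (\<lambda>z. \<phi> (z, y) * cond_prob Ys q y z))"
    using \<open>finite Ys\<close> by (simp only: expect_joint_eq_sum_expect_marg_cond_prob sum_subtractf)
  then have "ereal (expect_joint Z Ys p \<phi> - expect_joint Z Ys q \<phi>)
     = (\<Sum>y\<in>Ys. ereal (expect_marg Z Ys p (\<lambda>z. \<phi> (z, y) * cond_prob Ys p y z)
             - expect_marg Z Ys q (\<lambda>z. \<phi> (z, y) * cond_prob Ys q y z)))"
    by simp
  also have "\<dots> \<le> (\<Sum>y\<in>Ys. wasserstein_check Z Ys p q y)"
    unfolding wasserstein_check_def by (intro sum_mono SUP_upper lipschitz)
  finally show "ereal (expect_joint Z Ys p \<phi> - expect_joint Z Ys q \<phi>)
     \<le> (\<Sum>y\<in>Ys. wasserstein_check Z Ys p q y)" .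
qed

end
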